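(* Fix $0<\lambda\le\Lambda$ and define for $X\in S^N$ the Pucci operators $\mathcal M^-(X)=\inf\{-\mathrm{tr}(MX):M\in S^N,\lambda I\le M\le\Lambda I\}$ and $\mathcal M^+(X)=\sup\{-\mathrm{tr}(MX):M\in S^N,\lambda I\le M\le\Lambda I\}$. Let $A$ be a metric space, $b:\mathbb{R}^N\times A\to\mathbb{R}^N$, $c:\mathbb{R}^N\times A\to\mathbb{R}$ continuous, satisfying: for every $R>0$ there is $K_R$ with $\sup_{|x|\le R,\alpha}(|b|+|c|)\le K_R$ and $|b(x,\alpha)-b(y,\alpha)|\le K_R|x-y|$ for $|x|,|y|\le R$; $c\ge0$ and $c$ is continuous in $x$ uniformly in $|x|\le R,\alpha\in A$. Set $H(x,t,p)=\inf_{\alpha}\{c(x,\alpha)t-b(x,\alpha)\cdot p\}$ and $\tilde H(x,t,p)=\sup_\alpha\{c(x,\alpha)t-b(x,\alpha)\cdot p\}$. Assume that for some $R_o>0$ $$\sup_{\alpha\in A}\big(b(x,\alpha)\cdot x-c(x,\alpha)|x|^2\log|x|\big)\le\lambda-(N-1)\Lambda\quad\text{for }|x|\ge R_o.$$ (a) If $u\in USC(\mathbb{R}^N)$ is a viscosity subsolution of $\mathcal M^-(D^2u)+H(x,u,Du)=0$ in $\mathbb{R}^N$ with $\limsup_{|x|\to\infty}u(x)/\log|x|\le0$, and either $c\equiv0$ or $u\ge0$, then $u$ is constant. (b) If $v\in LSC(\mathbb{R}^N)$ is a viscosity supersolution of $\mathcal M^+(D^2v)+\tilde H(x,v,Dv)=0$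 in $\mathbb{R}^N$ with $\liminf_{|x|\to\infty}v(x)/\log|x|\ge0$, and either $c\equiv0$ or $v\le0$, then $v$ is constant.
   Context: $S^N$ is the space of real symmetric $N\times N$ matrices. *)

theory Defs
  imports "HOL-Analysis.Analysis" "HOL-Library.Liminf_Limsup"
begin

definition usc :: "('a::topological_space \<Rightarrow> real) \<Rightarrow> bool" where
  "usc u \<longleftrightarrow> (\<forall>a. open {x. u x < a})"

definition lsc :: "('a::topological_space \<Rightarrow> real) \<Rightarrow> bool" where
  "lsc u \<longleftrightarrow> (\<forall>a. open {x. u x > a})"

definition mat_le :: "real^'n^'n \<Rightarrow> real^'n^'n \<Rightarrow> bool" where
  "mat_le A B \<longleftrightarrow> (\<forall>\<xi>. \<xi> \<bullet> (A *v \<xi>) \<le> \<xi> \<bullet> (B *v \<xi>))"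

definition pucci_set :: "real \<Rightarrow> real \<Rightarrow> (real^'n^'n) set" where
  "pucci_set lam Lam = {M. transpose M = M \<and> mat_le (mat lam) M \<and> mat_le M (mat Lam)}"

definition pucci_minus :: "real \<Rightarrow> real \<Rightarrow> real^'n^'n \<Rightarrow> real" where
  "pucci_minus lam Lam X = (INF M\<in>pucci_set lam Lam. - trace (M ** X))"

definition pucci_plus :: "real \<Rightarrow> real \<Rightarrow> real^'n^'n \<Rightarrow> real" where
  "pucci_plus lam Lam X = (SUP M\<in>pucci_set lam Lam. - trace (M ** X))"

definition C2_with :: "(real^'n \<Rightarrow> real) \<Rightarrow> (real^'n \<Rightarrow> real^'n) \<Rightarrow> (real^'n \<Rightarrow> real^'n^'n) \<Rightarrow> bool" where
  "C2_with phi Dphi D2phi \<longleftrightarrow>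
     (\<forall>x. (phi has_derivative (\<lambda>h. Dphi x \<bullet> h)) (at x)) \<and>
     (\<forall>x. (Dphi has_derivative (\<lambda>h. D2phi x *v h)) (at x)) \<and>
     continuous_on UNIV D2phi"

definition visc_subsolution ::
  "(real^'n \<Rightarrow> real \<Rightarrow> real^'n \<Rightarrow> real^'n^'n \<Rightarrow> real) \<Rightarrow> (real^'n \<Rightarrow> real) \<Rightarrow> bool" where
  "visc_subsolution F u \<longleftrightarrow> usc u \<and>
     (\<forall>phi Dphi D2phi x0. C2_with phi Dphi D2phi \<and>
        (\<exists>r>0. \<forall>y\<in>ball x0 r. u y - phi y \<le> u x0 - phi x0) \<longrightarrow>
        F x0 (u x0) (Dphi x0) (D2phi x0) \<le> 0)"

definition visc_supersolution ::
  "(real^'n \<Rightarrow> real \<Rightarrow> real^'n \<Rightarrow> real^'n^'n \<Rightarrow> real) \<Rightarrow> (real^'n \<Rightarrow> real) \<Rightarrow> bool" where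
  "visc_supersolution F v \<longleftrightarrow> lsc v \<and>
     (\<forall>phi Dphi D2phi x0. C2_with phi Dphi D2phi \<and>
        (\<exists>r>0. \<forall>y\<in>ball x0 r. v y - phi y \<ge> v x0 - phi x0) \<longrightarrow>
        F x0 (v x0) (Dphi x0) (D2phi x0) \<ge> 0)"

end

theory Submission
  imports Defs
begin

text \<open>A subsolution \<open>u = o(ln |x|)\<close> is bounded above by its maximum \<open>a\<close> over a large ball.
  Indeed, for a radial, radially concave \<open>\<phi>(|x|)\<close> the Pucci operator is at least
  \<open>-(N - 1) \<Lambda> \<phi>'/r - \<lambda> \<phi>''\<close>, which for \<open>\<phi> = \<epsilon> ln r\<close> equals \<open>\<epsilon> (\<lambda> - (N - 1) \<Lambda>) / r\<^sup>2\<close>; so the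
  growth condition on \<open>b \<cdot> x - c |x|\<^sup>2 ln |x|\<close> makes \<open>a + \<epsilon> ln |x|\<close> (suitably smoothed) a strict
  supersolution outside the ball, which \<open>u\<close> cannot touch from above. Letting \<open>\<epsilon> \<rightarrow> 0\<close>, \<open>u\<close> attains
  its global maximum, and Hopf's exponential barrier shows that a subsolution attaining an
  interior maximum is constant. Part (b) is part (a) applied to \<open>-v\<close>.\<close>

abbreviation pucci_hjb_minus ::
  "real \<Rightarrow> real \<Rightarrow> (real^'n \<Rightarrow> 'a \<Rightarrow> real^'n) \<Rightarrow> (real^'n \<Rightarrow> 'a \<Rightarrow> real)
    \<Rightarrow> real^'n \<Rightarrow> real \<Rightarrow> real^'n \<Rightarrow> real^'n^'n \<Rightarrow> real" where
  "pucci_hjb_minus lam Lam b c \<equiv>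
     \<lambda>x t p X. pucci_minus lam Lam X + (INF \<alpha>. c x \<alpha> * t - b x \<alpha> \<bullet> p)"

abbreviation pucci_hjb_plus ::
  "real \<Rightarrow> real \<Rightarrow> (real^'n \<Rightarrow> 'a \<Rightarrow> real^'n) \<Rightarrow> (real^'n \<Rightarrow> 'a \<Rightarrow> real)
    \<Rightarrow> real^'n \<Rightarrow> real \<Rightarrow> real^'n \<Rightarrow> real^'n^'n \<Rightarrow> real" where
  "pucci_hjb_plus lam Lam b c \<equiv>
     \<lambda>x t p X. pucci_plus lam Lam X + (SUP \<alpha>. c x \<alpha> * t - b x \<alpha> \<bullet> p)"

definition outer :: "real^'n \<Rightarrow> real^'n^'n" where
  "outer v = (\<chi> i j. v$i * v$j)"

lemma matrix_vector_mult_mat: "(mat c :: real^'n^'n) *v x = c *\<^sub>R x"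
  by (simp add: vec_eq_iff matrix_vector_mult_def mat_def if_distrib[of "\<lambda>z. z * _"] cong: if_cong)

lemma outer_mult_vec: "outer v *v h = (v \<bullet> h) *\<^sub>R v"
  by (simp add: vec_eq_iff matrix_vector_mult_def outer_def inner_vec_def sum_distrib_left
      sum_distrib_right mult.assoc mult.commute mult.left_commute)

lemma matrix_uminus_mult_vec: "(- A) *v h = - (A *v (h::real^'n))" for A :: "real^'n^'m"
  by (simp add: vec_eq_iff matrix_vector_mult_def sum_negf)

lemma trace_mult_radial:
  "trace ((M::real^'n^'n) ** (a *\<^sub>R mat 1 + \<beta> *\<^sub>R outer v)) = a * trace M + \<beta> * (v \<bullet> (M *v v))"
proof -
  have "trace (M ** (a *\<^sub>R mat 1)) = a * trace M"
    by (simp add: trace_def matrix_matrix_mult_def mat_def sum_distrib_left if_distrib sum.delta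
        mult.commute cong: if_cong)
  moreover have "trace (M ** (\<beta> *\<^sub>R outer v)) = \<beta> * (v \<bullet> (M *v v))"
    by (simp add: trace_def matrix_matrix_mult_def outer_def inner_vec_def matrix_vector_mult_def
        sum_distrib_left mult.assoc mult.commute mult.left_commute)
  ultimately show ?thesis
    by (simp add: matrix_add_ldistrib trace_add)
qed

lemma trace_mult_uminus: "trace ((M::real^'n^'n) ** (- X)) = - trace (M ** X)"
  by (simp add: trace_def matrix_matrix_mult_def sum_negf)

lemma diag_eq_inner_axis: "M$i$i = axis i 1 \<bullet> ((M::real^'n^'n) *v axis i 1)"
  by (simp add: inner_vec_def matrix_vector_mult_def axis_def if_distribR if_distrib sum.delta
      cong: if_cong)

lemma mat_le_mat_right: "mat_le A (mat c) \<longleftrightarrow> (\<forall>\<xi>. \<xi> \<bullet> (A *v \<xi>) \<le> c * (\<xi> \<bullet> \<xi>))"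
  by (simp add: mat_le_def matrix_vector_mult_mat)

lemma mat_le_mat_left: "mat_le (mat c) A \<longleftrightarrow> (\<forall>\<xi>. c * (\<xi> \<bullet> \<xi>) \<le> \<xi> \<bullet> (A *v \<xi>))"
  by (simp add: mat_le_def matrix_vector_mult_mat)

lemma sum_component_inner_mult_axis:
  "(\<Sum>i\<in>UNIV. (x::real^'n)$i * (x \<bullet> (M *v axis i 1))) = x \<bullet> (M *v x)"
proof -
  have "(\<Sum>i\<in>UNIV. x$i * (x \<bullet> (M *v axis i 1))) = x \<bullet> (M *v (\<Sum>i\<in>UNIV. x$i *\<^sub>R axis i 1))"
    by (simp add: linear_sum[OF matrix_vector_mul_linear] inner_sum_right matrix_vector_mult_scaleR)
  then show ?thesis
    using basis_expansion[of x] by (simp add: scalar_mult_eq_scaleR)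
qed

text \<open>Sum \<open>w M w \<le> L |w|\<^sup>2\<close> over the projections \<open>w\<^sub>i = |x|\<^sup>2 e\<^sub>i - x\<^sub>i x\<close> of the standard basis
  onto \<open>x\<^sup>\<bottom>\<close>.\<close>
lemma inner_self_mult_trace_le:
  fixes M :: "real^'n^'n" and x :: "real^'n"
  assumes le: "mat_le M (mat L)" and "x \<noteq> 0"
  shows "(x \<bullet> x) * trace M \<le> (real CARD('n) - 1) * L * (x \<bullet> x) + x \<bullet> (M *v x)"
proof -
  define s where "s = x \<bullet> x"
  have spos: "0 < s" using \<open>x \<noteq> 0\<close> by (simp add: s_def)
  define w where "w i = s *\<^sub>R axis i 1 - x$i *\<^sub>R x" for i
  have ww: "w i \<bullet> w i = s * s - 2 * s * (x$i) * (x$i) + (x$i) * (x$i) * s" for i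
    by (simp add: w_def algebra_simps inner_axis inner_axis' inner_axis_axis s_def inner_commute)
  have wm: "w i \<bullet> (M *v w i) = s * s * M$i$i - s * x$i * (M *v x)$i
          - s * x$i * (x \<bullet> (M *v axis i 1)) + x$i * x$i * (x \<bullet> (M *v x))" for i
    by (simp add: w_def algebra_simps inner_axis inner_axis' diag_eq_inner_axis)
  have sx: "(\<Sum>i\<in>UNIV. x$i * x$i) = s" by (simp add: s_def inner_vec_def)
  have sxm: "(\<Sum>i\<in>UNIV. x$i * (M *v x)$i) = x \<bullet> (M *v x)" by (simp add: inner_vec_def)
  have "(\<Sum>i\<in>UNIV. w i \<bullet> (M *v w i)) \<le> (\<Sum>i\<in>UNIV. L * (w i \<bullet> w i))"
    using le by (intro sum_mono) (simp add: mat_le_mat_right)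
  moreover have "(\<Sum>i\<in>UNIV. w i \<bullet> (M *v w i)) = s * s * trace M - s * (x \<bullet> (M *v x))"
  proof -
    have "(\<Sum>i\<in>UNIV. w i \<bullet> (M *v w i)) = s * s * trace M - s * (\<Sum>i\<in>UNIV. x$i * (M *v x)$i)
       - s * (\<Sum>i\<in>UNIV. x$i * (x \<bullet> (M *v axis i 1))) + (\<Sum>i\<in>UNIV. x$i * x$i) * (x \<bullet> (M *v x))"
      by (simp add: wm sum.distrib sum_subtractf sum_distrib_left sum_distrib_right trace_def mult.assoc)
    then show ?thesis by (simp add: sxm sum_component_inner_mult_axis sx)
  qed
  moreover have "(\<Sum>i\<in>UNIV. L * (w i \<bullet> w i)) = L * (real CARD('n) - 1) * s * s"
  proof -
    have "(\<Sum>i\<in>UNIV. L * (w i \<bullet> w i)) = (\<Sum>i\<in>UNIV. L * (s * s) - L * s * (x$i * x$i))"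
      by (rule sum.cong) (auto simp: ww algebra_simps)
    also have "\<dots> = L * (real CARD('n) * s * s - s * (\<Sum>i\<in>UNIV. x$i * x$i))"
      by (simp add: sum_subtractf sum_distrib_left algebra_simps)
    finally show ?thesis by (simp add: sx algebra_simps)
  qed
  ultimately have "s * (s * trace M) \<le> s * ((real CARD('n) - 1) * L * s + x \<bullet> (M *v x))"
    by (simp add: algebra_simps)
  then show ?thesis using spos by (simp add: s_def)
qed

lemma mat_in_pucci_set: "0 < lam \<Longrightarrow> lam \<le> Lam \<Longrightarrow> mat lam \<in> pucci_set lam Lam"
  by (auto simp: pucci_set_def mat_le_def matrix_vector_mult_mat transpose_mat intro!: mult_right_mono)

text \<open>The matrix \<open>a I + \<beta> v v\<^sup>T\<close> has eigenvalue \<open>a \<ge> 0\<close> on \<open>v\<^sup>\<bottom>\<close> and \<open>a + \<beta> |v|\<^sup>2 \<le> 0\<close> along \<open>v\<close>;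
  the bound is in fact an equality.\<close>
lemma pucci_minus_radial_ge:
  fixes v :: "real^'n"
  assumes lam: "0 < lam" "lam \<le> Lam" and "v \<noteq> 0" "0 \<le> a" and concave: "a + \<beta> * (v \<bullet> v) \<le> 0"
  shows "- ((real CARD('n) - 1) * Lam * a + lam * (a + \<beta> * (v \<bullet> v)))
           \<le> pucci_minus lam Lam (a *\<^sub>R mat 1 + \<beta> *\<^sub>R outer v)"
  unfolding pucci_minus_def
proof (rule cINF_greatest)
  show "pucci_set lam Lam \<noteq> {}" using mat_in_pucci_set[OF lam] by blast
next
  fix M :: "real^'n^'n" assume "M \<in> pucci_set lam Lam"
  then have upper: "mat_le M (mat Lam)" and lower: "mat_le (mat lam) M"
    by (auto simp: pucci_set_def)
  define s where "s = v \<bullet> v"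
  have spos: "0 < s" using \<open>v \<noteq> 0\<close> by (simp add: s_def)
  have tr: "s * trace M \<le> (real CARD('n) - 1) * Lam * s + v \<bullet> (M *v v)"
    unfolding s_def by (rule inner_self_mult_trace_le[OF upper \<open>v \<noteq> 0\<close>])
  have q: "lam * s \<le> v \<bullet> (M *v v)" using lower by (simp add: mat_le_mat_left s_def)
  have "s * trace (M ** (a *\<^sub>R mat 1 + \<beta> *\<^sub>R outer v)) = a * (s * trace M) + s * \<beta> * (v \<bullet> (M *v v))"
    by (simp only: trace_mult_radial) (simp add: algebra_simps)
  also have "\<dots> \<le> a * ((real CARD('n) - 1) * Lam * s + v \<bullet> (M *v v)) + s * \<beta> * (v \<bullet> (M *v v))"
    using tr \<open>0 \<le> a\<close> by (simp add: mult_left_mono)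
  also have "\<dots> = s * (a * (real CARD('n) - 1) * Lam) + (a + \<beta> * s) * (v \<bullet> (M *v v))"
    by (simp add: algebra_simps)
  also have "\<dots> \<le> s * (a * (real CARD('n) - 1) * Lam) + (a + \<beta> * s) * (lam * s)"
    using q concave by (simp add: s_def mult_left_mono_neg)
  finally have "s * trace (M ** (a *\<^sub>R mat 1 + \<beta> *\<^sub>R outer v))
      \<le> s * ((real CARD('n) - 1) * Lam * a + lam * (a + \<beta> * s))"
    by (simp add: algebra_simps)
  then have "trace (M ** (a *\<^sub>R mat 1 + \<beta> *\<^sub>R outer v))
      \<le> (real CARD('n) - 1) * Lam * a + lam * (a + \<beta> * s)"
    using spos by (simp only: mult_le_cancel_left_pos)
  then show "- ((real CARD('n) - 1) * Lam * a + lam * (a + \<beta> * (v \<bullet> v)))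
      \<le> - trace (M ** (a *\<^sub>R mat 1 + \<beta> *\<^sub>R outer v))"
    unfolding s_def by linarith
qed

lemma pucci_plus_uminus: "pucci_plus lam Lam (- X) = - pucci_minus lam Lam X"
  unfolding pucci_plus_def pucci_minus_def
  by (simp add: trace_mult_uminus Inf_real_def image_image)

lemma usc_diff_continuous:
  assumes "usc u" "continuous_on UNIV \<phi>"
  shows "usc (\<lambda>x. u x - \<phi> x)"
  unfolding usc_def
proof
  fix a
  have "{x. u x - \<phi> x < a} = (\<Union>q. {x. u x < q} \<inter> {x. q - a < \<phi> x})"
  proof (intro set_eqI iffI)
    fix x assume "x \<in> {x. u x - \<phi> x < a}"
    then have "x \<in> {x. u x < (u x + (\<phi> x + a)) / 2} \<inter> {x. (u x + (\<phi> x + a)) / 2 - a < \<phi> x}"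
      by (auto simp: field_simps)
    then show "x \<in> (\<Union>q. {x. u x < q} \<inter> {x. q - a < \<phi> x})" by blast
  qed auto
  moreover have "open ({x. u x < q} \<inter> {x. q - a < \<phi> x})" for q
    using assms unfolding usc_def
    by (intro open_Int) (auto intro!: open_Collect_less continuous_intros simp: continuous_on_eq_continuous_at)
  ultimately show "open {x. u x - \<phi> x < a}" by auto
qed

lemma lsc_imp_usc_uminus: "lsc v \<Longrightarrow> usc (\<lambda>x. - v x)"
proof -
  have "{x. - v x < a} = {x. - a < v x}" for a by auto
  then show "lsc v \<Longrightarrow> usc (\<lambda>x. - v x)" unfolding usc_def lsc_def by simp
qed

lemma usc_attains_max:
  fixes f :: "'a::topological_space \<Rightarrow> real"
  assumes "usc f" "compact K" "K \<noteq> {}"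
  obtains x where "x \<in> K" "\<And>y. y \<in> K \<Longrightarrow> f y \<le> f x"
proof -
  have "\<exists>x\<in>K. \<forall>y\<in>K. f y \<le> f x"
  proof (rule ccontr)
    assume "\<not> ?thesis"
    then have "K \<subseteq> (\<Union>y\<in>K. {x. f x < f y})" by (auto simp: not_le)
    moreover have "\<forall>y\<in>K. open {x. f x < f y}" using assms(1) by (auto simp: usc_def)
    ultimately obtain T where T: "T \<subseteq> K" "finite T" "K \<subseteq> (\<Union>y\<in>T. {x. f x < f y})"
      using compactE_image[OF assms(2)] by metis
    then have "T \<noteq> {}" using assms(3) by auto
    then have "Max (f ` T) \<in> f ` T" using \<open>finite T\<close> by (intro Max_in) auto
    then obtain t where "t \<in> T" "f t = Max (f ` T)" by auto
    moreover obtain y where "y \<in> T" "f t < f y" using T \<open>t \<in> T\<close> by blast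
    moreover have "f y \<le> Max (f ` T)" using \<open>finite T\<close> \<open>y \<in> T\<close> by (intro Max_ge) auto
    ultimately show False by linarith
  qed
  then show ?thesis using that by blast
qed

lemma usc_attains_local_max:
  fixes w :: "'a::metric_space \<Rightarrow> real"
  assumes "usc w" "compact K" "x \<in> K" "open U"
    and inside: "\<And>y. y \<in> K \<Longrightarrow> w x \<le> w y \<Longrightarrow> y \<in> U"
    and outside: "\<And>y. y \<in> U \<Longrightarrow> y \<notin> K \<Longrightarrow> w y \<le> w x"
  obtains x0 where "x0 \<in> K" "w x \<le> w x0" "\<exists>r>0. \<forall>y\<in>ball x0 r. w y \<le> w x0"
proof -
  obtain x0 where x0: "x0 \<in> K" "\<And>y. y \<in> K \<Longrightarrow> w y \<le> w x0"
    using usc_attains_max[OF assms(1,2)] \<open>x \<in> K\<close> by blast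
  have "w x \<le> w x0" using x0 \<open>x \<in> K\<close> by blast
  then obtain r where "r > 0" "ball x0 r \<subseteq> U"
    using inside[OF x0(1)] \<open>open U\<close> open_contains_ball by blast
  have "w y \<le> w x0" if "y \<in> ball x0 r" for y
  proof (cases "y \<in> K")
    case False
    then show ?thesis
      using outside[of y] \<open>ball x0 r \<subseteq> U\<close> that \<open>w x \<le> w x0\<close> by auto
  qed (use x0 in auto)
  then have "\<forall>y\<in>ball x0 r. w y \<le> w x0" by blast
  with x0(1) \<open>w x \<le> w x0\<close> \<open>r > 0\<close> show ?thesis using that by blast
qed

lemma C2_with_continuous: "C2_with phi Dphi D2phi \<Longrightarrow> continuous_on UNIV phi"
  unfolding C2_with_def
  by (metis continuous_at_imp_continuous_on has_derivative_continuous)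

lemma C2_with_uminus:
  assumes "C2_with phi Dphi D2phi"
  shows "C2_with (\<lambda>x. - phi x) (\<lambda>x. - Dphi x) (\<lambda>x. - D2phi x)"
  unfolding C2_with_def
proof (intro conjI allI)
  fix x
  have "((\<lambda>x. - phi x) has_derivative (\<lambda>h. - (Dphi x \<bullet> h))) (at x)"
    using assms by (intro has_derivative_minus) (auto simp: C2_with_def)
  then show "((\<lambda>x. - phi x) has_derivative (\<lambda>h. - Dphi x \<bullet> h)) (at x)"
    by simp
  have "((\<lambda>x. - Dphi x) has_derivative (\<lambda>h. - (D2phi x *v h))) (at x)"
    using assms by (intro has_derivative_minus) (auto simp: C2_with_def)
  then show "((\<lambda>x. - Dphi x) has_derivative (\<lambda>h. - D2phi x *v h)) (at x)"
    by (simp add: matrix_uminus_mult_vec)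
next
  show "continuous_on UNIV (\<lambda>x. - D2phi x)"
    using assms by (intro continuous_intros) (auto simp: C2_with_def)
qed

lemma C2_with_radial:
  fixes p :: "real^'n" and G G' G'' :: "real \<Rightarrow> real"
  assumes G: "\<And>s. s \<ge> 0 \<Longrightarrow> (G has_real_derivative G' s) (at s)"
    and G': "\<And>s. s \<ge> 0 \<Longrightarrow> (G' has_real_derivative G'' s) (at s)"
    and G'': "\<And>s. s \<ge> 0 \<Longrightarrow> isCont G'' s"
  shows "C2_with (\<lambda>x. G ((x-p)\<bullet>(x-p))) (\<lambda>x. (2 * G' ((x-p)\<bullet>(x-p))) *\<^sub>R (x-p))
     (\<lambda>x. (2 * G' ((x-p)\<bullet>(x-p))) *\<^sub>R mat 1 + (4 * G'' ((x-p)\<bullet>(x-p))) *\<^sub>R outer (x-p))"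
  unfolding C2_with_def
proof (intro conjI allI)
  fix x :: "real^'n"
  let ?s = "(x-p)\<bullet>(x-p)"
  have sq: "((\<lambda>x. (x-p)\<bullet>(x-p)) has_derivative (\<lambda>h. 2 * ((x-p) \<bullet> h))) (at x)"
    by (auto intro!: derivative_eq_intros simp: inner_commute)
  have "((\<lambda>x. G ((x-p)\<bullet>(x-p))) has_derivative ((*) (G' ?s) \<circ> (\<lambda>h. 2 * ((x-p) \<bullet> h)))) (at x)"
    using diff_chain_at[OF sq, of G] G[of ?s] by (simp add: has_field_derivative_def o_def)
  then show "((\<lambda>x. G ((x-p)\<bullet>(x-p))) has_derivative (\<lambda>h. ((2 * G' ?s) *\<^sub>R (x-p)) \<bullet> h)) (at x)"
    by (simp add: o_def algebra_simps)
  have "((\<lambda>x. G' ((x-p)\<bullet>(x-p))) has_derivative ((*) (G'' ?s) \<circ> (\<lambda>h. 2 * ((x-p) \<bullet> h)))) (at x)"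
    using diff_chain_at[OF sq, of G'] G'[of ?s] by (simp add: has_field_derivative_def o_def)
  then have "((\<lambda>x. (2 * G' ((x-p)\<bullet>(x-p))) *\<^sub>R (x-p)) has_derivative
      (\<lambda>h. (2 * G' ?s) *\<^sub>R h + (2 * ((2 * ((x-p) \<bullet> h)) * G'' ?s)) *\<^sub>R (x-p))) (at x)"
    by (auto intro!: derivative_eq_intros simp: o_def)
  then show "((\<lambda>x. (2 * G' ((x-p)\<bullet>(x-p))) *\<^sub>R (x-p)) has_derivative
      (\<lambda>h. ((2 * G' ?s) *\<^sub>R mat 1 + (4 * G'' ?s) *\<^sub>R outer (x-p)) *v h)) (at x)"
    by (rule has_derivative_eq_rhs)
      (auto simp: fun_eq_iff matrix_vector_mult_add_rdistrib scaleR_matrix_vector_assoc[symmetric]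
        outer_mult_vec algebra_simps)
next
  have "isCont (\<lambda>x. G' ((x-p)\<bullet>(x-p))) x" "isCont (\<lambda>x. G'' ((x-p)\<bullet>(x-p))) x" for x :: "real^'n"
    by (auto intro!: isCont_o2[OF _ DERIV_isCont[OF G']] isCont_o2[OF _ G''] continuous_intros)
  moreover have "continuous_on UNIV (\<lambda>x::real^'n. outer (x-p))"
    unfolding outer_def by (intro continuous_on_vec_lambda continuous_intros)
  ultimately show "continuous_on UNIV
      (\<lambda>x. (2 * G' ((x-p)\<bullet>(x-p))) *\<^sub>R mat 1 + (4 * G'' ((x-p)\<bullet>(x-p))) *\<^sub>R outer (x-p))"
    by (intro continuous_intros) (auto simp: continuous_on_eq_continuous_at)
qed

lemma subsolution_radial_test:
  fixes u :: "real^'n \<Rightarrow> real" and p x0 :: "real^'n"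
  assumes lam: "0 < lam" "lam \<le> Lam"
    and sub: "visc_subsolution (pucci_hjb_minus lam Lam b c) u"
    and G: "\<And>s. s \<ge> 0 \<Longrightarrow> (G has_real_derivative G' s) (at s)"
    and G': "\<And>s. s \<ge> 0 \<Longrightarrow> (G' has_real_derivative G'' s) (at s)"
    and G'': "\<And>s. s \<ge> 0 \<Longrightarrow> isCont G'' s"
    and max: "\<exists>r>0. \<forall>y\<in>ball x0 r. u y - G ((y-p)\<bullet>(y-p)) \<le> u x0 - G ((x0-p)\<bullet>(x0-p))"
    and s: "s = (x0-p)\<bullet>(x0-p)" and "x0 \<noteq> p"
    and "0 \<le> G' s" and concave: "2 * G' s + 4 * G'' s * s \<le> 0"
    and hamiltonian: "\<And>\<alpha>. B \<le> c x0 \<alpha> * u x0 - 2 * G' s * (b x0 \<alpha> \<bullet> (x0-p))"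
  shows "B \<le> (real CARD('n) - 1) * Lam * (2 * G' s) + lam * (2 * G' s + 4 * G'' s * s)"
proof -
  have "pucci_hjb_minus lam Lam b c x0 (u x0) ((2 * G' s) *\<^sub>R (x0-p))
          ((2 * G' s) *\<^sub>R mat 1 + (4 * G'' s) *\<^sub>R outer (x0-p)) \<le> 0"
    using sub C2_with_radial[OF G G' G'', of p] max unfolding visc_subsolution_def s by blast
  then have "pucci_minus lam Lam ((2 * G' s) *\<^sub>R mat 1 + (4 * G'' s) *\<^sub>R outer (x0-p))
      + (INF \<alpha>. c x0 \<alpha> * u x0 - 2 * G' s * (b x0 \<alpha> \<bullet> (x0-p))) \<le> 0"
    by (simp add: inner_scaleR_right)
  moreover have "x0 - p \<noteq> 0" using \<open>x0 \<noteq> p\<close> by simp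
  then have "- ((real CARD('n) - 1) * Lam * (2 * G' s) + lam * (2 * G' s + 4 * G'' s * s))
      \<le> pucci_minus lam Lam ((2 * G' s) *\<^sub>R mat 1 + (4 * G'' s) *\<^sub>R outer (x0-p))"
    using pucci_minus_radial_ge[OF lam, of "x0 - p" "2 * G' s" "4 * G'' s", folded s]
      \<open>0 \<le> G' s\<close> concave by simp
  moreover have "B \<le> (INF \<alpha>. c x0 \<alpha> * u x0 - 2 * G' s * (b x0 \<alpha> \<bullet> (x0-p)))"
    using hamiltonian by (intro cINF_greatest) auto
  ultimately show ?thesis by linarith
qed

section \<open>The logarithmic barrier\<close>

text \<open>As a function of \<open>r = |x|\<close>, with \<open>s = r\<^sup>2\<close>, this is \<open>a + \<epsilon> (4 + ln \<surd>(1 + r\<^sup>2) - 2/(1 + r\<^sup>2))\<close>: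
  it grows like \<open>\<epsilon> ln r\<close>, the last term makes it radially concave for \<open>r \<ge> \<surd>2\<close>, and the
  constant keeps it above \<open>a + 2\<epsilon>\<close>.\<close>
definition log_barrier :: "real \<Rightarrow> real \<Rightarrow> real \<Rightarrow> real" where
  "log_barrier a \<epsilon> s = a + 4 * \<epsilon> + \<epsilon> * (ln (1 + s) / 2 - 2 / (1 + s))"

definition log_barrier' :: "real \<Rightarrow> real \<Rightarrow> real" where
  "log_barrier' \<epsilon> s = \<epsilon> * (1 / (2 * (1 + s)) + 2 / (1 + s)^2)"

definition log_barrier'' :: "real \<Rightarrow> real \<Rightarrow> real" where
  "log_barrier'' \<epsilon> s = \<epsilon> * (- 1 / (2 * (1 + s)^2) - 4 / (1 + s)^3)"

lemma has_real_derivative_log_barrier: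
  "s \<ge> 0 \<Longrightarrow> (log_barrier a \<epsilon> has_real_derivative log_barrier' \<epsilon> s) (at s)"
  unfolding log_barrier_def[abs_def] log_barrier'_def
  by (rule derivative_eq_intros refl | simp)+ (simp add: divide_simps, algebra)

lemma has_real_derivative_log_barrier':
  "s \<ge> 0 \<Longrightarrow> (log_barrier' \<epsilon> has_real_derivative log_barrier'' \<epsilon> s) (at s)"
  unfolding log_barrier'_def[abs_def] log_barrier''_def
  by (rule derivative_eq_intros refl | simp)+ (simp add: divide_simps, rule disjI2, algebra)

lemma isCont_log_barrier'': "s \<ge> 0 \<Longrightarrow> isCont (log_barrier'' \<epsilon>) s"
  unfolding log_barrier''_def[abs_def] by (intro continuous_intros) auto

lemma log_barrier'_pos: "0 < \<epsilon> \<Longrightarrow> 0 \<le> s \<Longrightarrow> 0 < log_barrier' \<epsilon> s"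
  unfolding log_barrier'_def by (intro mult_pos_pos add_pos_pos) auto

lemma log_barrier_radially_concave:
  assumes "0 < \<epsilon>" "2 \<le> s"
  shows "log_barrier' \<epsilon> s + s * log_barrier'' \<epsilon> s < 0"
proof -
  have "log_barrier' \<epsilon> s + s * log_barrier'' \<epsilon> s = \<epsilon> * (5 - 3 * s) / (2 * (1 + s)^3)"
    using assms unfolding log_barrier'_def log_barrier''_def by (simp add: divide_simps) algebra
  moreover have "\<epsilon> * (5 - 3 * s) < 0" using assms by (intro mult_pos_neg) auto
  ultimately show ?thesis using assms by (simp add: divide_neg_pos)
qed

lemma log_barrier_ge: assumes "0 < \<epsilon>" "0 \<le> s" shows "a + 2 * \<epsilon> \<le> log_barrier a \<epsilon> s"
proof -
  have "0 \<le> ln (1 + s)" "2 / (1 + s) \<le> 2" using assms by (simp_all add: field_simps)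
  then have "-2 \<le> ln (1 + s) / 2 - 2 / (1 + s)" by linarith
  then have "\<epsilon> * (-2) \<le> \<epsilon> * (ln (1 + s) / 2 - 2 / (1 + s))"
    using assms by (intro mult_left_mono) auto
  then show ?thesis unfolding log_barrier_def by simp
qed

lemma log_barrier_ge_ln:
  assumes "0 < \<epsilon>" "0 < r"
  shows "a + 2 * \<epsilon> + \<epsilon> * ln r \<le> log_barrier a \<epsilon> (r^2)"
proof -
  have "ln (r^2) \<le> ln (1 + r^2)" using assms by (subst ln_le_cancel_iff) (auto simp: add_pos_nonneg)
  then have "ln r \<le> ln (1 + r^2) / 2" using assms by (simp add: ln_realpow)
  moreover have "2 / (1 + r^2) \<le> 2" by (simp add: field_simps add_pos_nonneg)
  ultimately have "\<epsilon> * (ln r - 2) \<le> \<epsilon> * (ln (1 + r^2) / 2 - 2 / (1 + r^2))"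
    using assms by (intro mult_left_mono) auto
  moreover have "\<epsilon> * (ln r - 2) = \<epsilon> * ln r - 2 * \<epsilon>" by (simp add: algebra_simps)
  ultimately show ?thesis unfolding log_barrier_def by linarith
qed

text \<open>Where \<open>c > 0\<close>, the discount term \<open>c u\<close> must absorb the term \<open>c |x|\<^sup>2 ln |x|\<close> of the growth
  condition multiplied by \<open>2 G'\<close>; this is possible as long as \<open>u\<close> lies above the barrier.\<close>
lemma ln_mult_log_barrier'_le:
  assumes "0 < \<epsilon>" "2 \<le> r" "0 \<le> a"
  shows "2 * r^2 * log_barrier' \<epsilon> (r^2) * ln r \<le> log_barrier a \<epsilon> (r^2)"
proof -
  define s where "s = r^2"
  have s4: "4 \<le> s" using assms mult_mono[of 2 r 2 r] by (simp add: s_def power2_eq_square)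
  have l0: "0 \<le> ln r" using assms by simp
  have "2 * r \<le> 1 + s" using zero_le_power2[of "r - 1"] by (simp add: s_def power2_eq_square algebra_simps)
  then have "2 * ln r \<le> 1 + s" using ln_le_minus_one[of r] assms by simp
  then have "s * (2 * ln r) \<le> (1 + s) * (1 + s)" using s4 l0 by (intro mult_mono) auto
  then have A: "4 * s / (1 + s)^2 * ln r \<le> 2"
    using s4 by (simp add: pos_divide_le_eq power2_eq_square)
  have B: "s / (1 + s) * ln r \<le> ln r" using l0 s4 by (intro mult_left_le_one_le) auto
  have "2 * s * log_barrier' \<epsilon> s * ln r = \<epsilon> * (s / (1 + s) * ln r + 4 * s / (1 + s)^2 * ln r)"
    unfolding log_barrier'_def using s4 by (simp add: divide_simps) algebra
  also have "\<dots> \<le> \<epsilon> * (ln r + 2)" using A B assms(1) by (intro mult_left_mono) simp_all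
  also have "\<dots> \<le> a + 2 * \<epsilon> + \<epsilon> * ln r" using assms by (simp add: algebra_simps)
  also have "\<dots> \<le> log_barrier a \<epsilon> s" unfolding s_def by (rule log_barrier_ge_ln) (use assms in auto)
  finally show ?thesis unfolding s_def .
qed

lemma continuous_on_log_barrier: "continuous_on UNIV (\<lambda>y::real^'n. log_barrier a \<epsilon> (y \<bullet> y))"
  by (intro continuous_at_imp_continuous_on ballI
      isCont_o2[OF _ DERIV_isCont[OF has_real_derivative_log_barrier]] continuous_intros) auto

lemma log_barrier_no_touching:
  fixes u :: "real^'n \<Rightarrow> real"
  assumes lam: "0 < lam" "lam \<le> Lam"
    and sub: "visc_subsolution (pucci_hjb_minus lam Lam b c) u"
    and c_nonneg: "\<And>\<alpha>. 0 \<le> c x0 \<alpha>"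
    and growth: "\<And>\<alpha>. b x0 \<alpha> \<bullet> x0
                  \<le> lam - (real CARD('n) - 1) * Lam + c x0 \<alpha> * (norm x0)\<^sup>2 * ln (norm x0)"
    and "2 \<le> norm x0" "0 < \<epsilon>"
    and above: "log_barrier a \<epsilon> (x0 \<bullet> x0) \<le> u x0"
    and discount: "(\<forall>\<alpha>. c x0 \<alpha> = 0) \<or> 0 \<le> a"
    and max: "\<exists>r>0. \<forall>y\<in>ball x0 r. u y - log_barrier a \<epsilon> (y \<bullet> y) \<le> u x0 - log_barrier a \<epsilon> (x0 \<bullet> x0)"
  shows False
proof -
  define L where "L = lam - (real CARD('n) - 1) * Lam"
  define r where "r = norm x0"
  define s where "s = x0 \<bullet> x0"
  define G' where "G' = log_barrier' \<epsilon> s"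
  define G'' where "G'' = log_barrier'' \<epsilon> s"
  have sr: "s = r^2" by (simp add: s_def r_def power2_norm_eq_inner)
  have "4 \<le> s" using \<open>2 \<le> norm x0\<close> mult_mono[of 2 r 2 r] by (simp add: sr r_def power2_eq_square)
  then have G'_pos: "0 < G'" and concave: "G' + G'' * s < 0"
    using \<open>0 < \<epsilon>\<close> log_barrier'_pos log_barrier_radially_concave
    by (auto simp: G'_def G''_def mult.commute)
  then have "2 * G' + 4 * G'' * s \<le> 0" by linarith
  have "- 2 * G' * L \<le> c x0 \<alpha> * u x0 - 2 * G' * (b x0 \<alpha> \<bullet> (x0 - 0))" for \<alpha>
  proof -
    have "0 \<le> c x0 \<alpha> * (u x0 - 2 * r^2 * G' * ln r)"
      using discount
    proof
      assume "0 \<le> a"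
      then have "2 * r^2 * G' * ln r \<le> log_barrier a \<epsilon> s"
        unfolding G'_def sr using ln_mult_log_barrier'_le[OF \<open>0 < \<epsilon>\<close>] \<open>2 \<le> norm x0\<close>
        by (simp add: r_def)
      then have "2 * r^2 * G' * ln r \<le> u x0" using above by (simp add: s_def)
      then show ?thesis using c_nonneg by simp
    qed simp
    moreover have "2 * G' * (b x0 \<alpha> \<bullet> x0) \<le> 2 * G' * (L + c x0 \<alpha> * r^2 * ln r)"
      using growth[of \<alpha>] G'_pos by (simp add: L_def r_def)
    ultimately show ?thesis by (simp add: algebra_simps)
  qed
  moreover have "\<exists>r>0. \<forall>y\<in>ball x0 r. u y - log_barrier a \<epsilon> ((y - 0) \<bullet> (y - 0))
          \<le> u x0 - log_barrier a \<epsilon> ((x0 - 0) \<bullet> (x0 - 0))"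
    using max by simp
  moreover have "x0 \<noteq> 0" using \<open>2 \<le> norm x0\<close> by auto
  ultimately have "- 2 * G' * L \<le> (real CARD('n) - 1) * Lam * (2 * G') + lam * (2 * G' + 4 * G'' * s)"
    unfolding G'_def G''_def
    by (intro subsolution_radial_test[OF lam sub has_real_derivative_log_barrier
        has_real_derivative_log_barrier' isCont_log_barrier''])
      (use G'_pos \<open>2 * G' + 4 * G'' * s \<le> 0\<close> in \<open>auto simp: s_def G'_def G''_def\<close>)
  then have "0 \<le> 4 * (lam * (G' + G'' * s))" by (simp add: L_def algebra_simps)
  with mult_pos_neg[OF \<open>0 < lam\<close> concave] show False by linarith
qed

lemma log_barrier_eventually_above:
  fixes u :: "'a::real_normed_vector \<Rightarrow> real"
  assumes lim: "\<And>\<epsilon>. 0 < \<epsilon> \<Longrightarrow> \<exists>R. \<forall>x. R \<le> norm x \<longrightarrow> u x \<le> \<epsilon> * ln (norm x)"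
    and "0 < \<epsilon>"
  shows "\<exists>R. \<forall>y. R \<le> norm y \<longrightarrow> u y < log_barrier a \<epsilon> ((norm y)^2)"
proof -
  obtain R1 where R1: "\<And>y. R1 \<le> norm y \<Longrightarrow> u y \<le> (\<epsilon>/2) * ln (norm y)"
    using lim[of "\<epsilon>/2"] \<open>0 < \<epsilon>\<close> by auto
  have "u y < log_barrier a \<epsilon> ((norm y)^2)" if "max R1 (exp (2 * \<bar>a\<bar> / \<epsilon>)) \<le> norm y" for y
  proof -
    have "exp (2 * \<bar>a\<bar> / \<epsilon>) \<le> norm y" using that by simp
    moreover have "0 < exp (2 * \<bar>a\<bar> / \<epsilon>)" by simp
    ultimately have "0 < norm y" by linarith
    have "2 * \<bar>a\<bar> / \<epsilon> \<le> ln (norm y)"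
      using ln_le_cancel_iff[of "exp (2 * \<bar>a\<bar> / \<epsilon>)" "norm y"] \<open>0 < norm y\<close> that by simp
    then have "\<bar>a\<bar> \<le> (\<epsilon>/2) * ln (norm y)"
      using \<open>0 < \<epsilon>\<close> by (simp add: pos_divide_le_eq algebra_simps)
    moreover have "u y \<le> (\<epsilon>/2) * ln (norm y)" using R1 that by simp
    moreover have "a + 2 * \<epsilon> + \<epsilon> * ln (norm y) \<le> log_barrier a \<epsilon> ((norm y)^2)"
      using log_barrier_ge_ln[OF \<open>0 < \<epsilon>\<close> \<open>0 < norm y\<close>] .
    ultimately show ?thesis using \<open>0 < \<epsilon>\<close> by linarith
  qed
  then show ?thesis by blast
qed

text \<open>The barrier lies above \<open>u\<close> on the ball and, by the growth of \<open>u\<close>, near infinity;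
  in between it cannot touch \<open>u\<close> from above.\<close>
lemma subsolution_le_log_barrier:
  fixes u :: "real^'n \<Rightarrow> real"
  assumes lam: "0 < lam" "lam \<le> Lam"
    and sub: "visc_subsolution (pucci_hjb_minus lam Lam b c) u"
    and c_nonneg: "\<And>x \<alpha>. 0 \<le> c x \<alpha>"
    and growth: "\<And>x \<alpha>. r0 \<le> norm x \<Longrightarrow>
           b x \<alpha> \<bullet> x \<le> lam - (real CARD('n) - 1) * Lam + c x \<alpha> * (norm x)\<^sup>2 * ln (norm x)"
    and lim: "\<And>\<epsilon>. 0 < \<epsilon> \<Longrightarrow> \<exists>R. \<forall>x. R \<le> norm x \<longrightarrow> u x \<le> \<epsilon> * ln (norm x)"
    and "2 \<le> r0"
    and inside: "\<And>y. norm y \<le> r0 \<Longrightarrow> u y \<le> a"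
    and discount: "(\<forall>x \<alpha>. c x \<alpha> = 0) \<or> 0 \<le> a"
    and "0 < \<epsilon>"
  shows "u x \<le> log_barrier a \<epsilon> (x \<bullet> x)"
proof (rule ccontr)
  define w where "w y = u y - log_barrier a \<epsilon> (y \<bullet> y)" for y
  assume "\<not> u x \<le> log_barrier a \<epsilon> (x \<bullet> x)"
  then have "0 < w x" by (simp add: w_def)
  have competitor: "r0 < norm y" if "0 < w y" for y
  proof (rule ccontr)
    assume "\<not> r0 < norm y"
    then have "u y \<le> a" by (intro inside) simp
    moreover have "a + 2 * \<epsilon> \<le> log_barrier a \<epsilon> (y \<bullet> y)"
      using \<open>0 < \<epsilon>\<close> by (intro log_barrier_ge) simp_all
    ultimately show False using that[unfolded w_def] \<open>0 < \<epsilon>\<close> by linarith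
  qed
  obtain R where "\<And>y. R \<le> norm y \<Longrightarrow> u y < log_barrier a \<epsilon> ((norm y)^2)"
    using log_barrier_eventually_above[OF lim \<open>0 < \<epsilon>\<close>, of a] by auto
  then have R: "\<And>y. R \<le> norm y \<Longrightarrow> w y < 0" by (simp add: w_def power2_norm_eq_inner)
  have "usc u" using sub by (simp add: visc_subsolution_def)
  then have "usc w"
    unfolding w_def[abs_def] by (rule usc_diff_continuous[OF _ continuous_on_log_barrier])
  define Ann where "Ann = cball (0::real^'n) (max R (norm x)) \<inter> {y. r0 \<le> norm y}"
  have "compact Ann" unfolding Ann_def
    by (rule compact_Int_closed) (auto intro!: closed_Collect_le continuous_intros)
  moreover have "x \<in> Ann" using competitor[OF \<open>0 < w x\<close>] by (simp add: Ann_def)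
  moreover have "open {y. r0 < norm y}" by (intro open_Collect_less continuous_intros)
  moreover have "y \<in> {y. r0 < norm y}" if "w x \<le> w y" for y
    using competitor[of y] \<open>0 < w x\<close> that by simp
  moreover have "w y \<le> w x" if "y \<in> {y. r0 < norm y}" "y \<notin> Ann" for y
  proof -
    have "\<not> norm y \<le> max R (norm x)" using that by (simp add: Ann_def)
    then have "w y < 0" by (intro R) simp
    with \<open>0 < w x\<close> show ?thesis by simp
  qed
  ultimately obtain x0 where x0: "x0 \<in> Ann" "w x \<le> w x0" "\<exists>r>0. \<forall>y\<in>ball x0 r. w y \<le> w x0"
    by (rule usc_attains_local_max[OF \<open>usc w\<close>])
  show False
  proof (rule log_barrier_no_touching[OF lam sub c_nonneg growth])
    show "r0 \<le> norm x0" "2 \<le> norm x0" using x0(1) \<open>2 \<le> r0\<close> by (auto simp: Ann_def)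
    show "log_barrier a \<epsilon> (x0 \<bullet> x0) \<le> u x0" using x0(2) \<open>0 < w x\<close> by (simp add: w_def)
    show "(\<forall>\<alpha>. c x0 \<alpha> = 0) \<or> 0 \<le> a" using discount by auto
    show "\<exists>r>0. \<forall>y\<in>ball x0 r. u y - log_barrier a \<epsilon> (y \<bullet> y) \<le> u x0 - log_barrier a \<epsilon> (x0 \<bullet> x0)"
      using x0(3) by (simp add: w_def)
  qed fact
qed

lemma subsolution_le_outside_ball:
  fixes u :: "real^'n \<Rightarrow> real"
  assumes "0 < lam" "lam \<le> Lam"
    and "visc_subsolution (pucci_hjb_minus lam Lam b c) u"
    and "\<And>x \<alpha>. 0 \<le> c x \<alpha>"
    and "\<And>x \<alpha>. r0 \<le> norm x \<Longrightarrow>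
           b x \<alpha> \<bullet> x \<le> lam - (real CARD('n) - 1) * Lam + c x \<alpha> * (norm x)\<^sup>2 * ln (norm x)"
    and "\<And>\<epsilon>. 0 < \<epsilon> \<Longrightarrow> \<exists>R. \<forall>x. R \<le> norm x \<longrightarrow> u x \<le> \<epsilon> * ln (norm x)"
    and "2 \<le> r0"
    and "\<And>y. norm y \<le> r0 \<Longrightarrow> u y \<le> a"
    and "(\<forall>x \<alpha>. c x \<alpha> = 0) \<or> 0 \<le> a"
  shows "u x \<le> a"
proof -
  define C where "C = 4 + ln (1 + x \<bullet> x) / 2 - 2 / (1 + x \<bullet> x)"
  have "0 < C"
  proof -
    have "0 \<le> ln (1 + x \<bullet> x)" "2 / (1 + x \<bullet> x) \<le> 2" by (simp_all add: field_simps add_pos_nonneg)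
    then show ?thesis unfolding C_def by linarith
  qed
  show ?thesis
  proof (rule field_le_epsilon)
    fix e :: real assume "0 < e"
    have "log_barrier a \<epsilon> (x \<bullet> x) = a + \<epsilon> * C" for \<epsilon>
      unfolding log_barrier_def C_def by (simp add: algebra_simps)
    then have "log_barrier a (e / C) (x \<bullet> x) = a + e" using \<open>0 < C\<close> by simp
    moreover have "u x \<le> log_barrier a (e / C) (x \<bullet> x)"
      by (rule subsolution_le_log_barrier[OF assms divide_pos_pos[OF \<open>0 < e\<close> \<open>0 < C\<close>]])
    ultimately show "u x \<le> a + e" by simp
  qed
qed

section \<open>The exponential barrier and the strong maximum principle\<close>

definition exp_barrier :: "real \<Rightarrow> real \<Rightarrow> real \<Rightarrow> real \<Rightarrow> real \<Rightarrow> real" where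
  "exp_barrier m \<sigma> k \<rho> s = m + \<sigma> * exp (- k * \<rho>^2) - \<sigma> * exp (- k * s)"

definition exp_barrier' :: "real \<Rightarrow> real \<Rightarrow> real \<Rightarrow> real" where
  "exp_barrier' \<sigma> k s = \<sigma> * k * exp (- k * s)"

definition exp_barrier'' :: "real \<Rightarrow> real \<Rightarrow> real \<Rightarrow> real" where
  "exp_barrier'' \<sigma> k s = - \<sigma> * k^2 * exp (- k * s)"

lemma has_real_derivative_exp_barrier:
  "(exp_barrier m \<sigma> k \<rho> has_real_derivative exp_barrier' \<sigma> k s) (at s)"
  unfolding exp_barrier_def[abs_def] exp_barrier'_def
  by (rule derivative_eq_intros refl | simp)+

lemma has_real_derivative_exp_barrier':
  "(exp_barrier' \<sigma> k has_real_derivative exp_barrier'' \<sigma> k s) (at s)"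
  unfolding exp_barrier'_def[abs_def] exp_barrier''_def
  by (rule derivative_eq_intros refl | simp)+ (simp add: power2_eq_square)

lemma isCont_exp_barrier'': "isCont (exp_barrier'' \<sigma> k) s"
  unfolding exp_barrier''_def[abs_def] by (intro continuous_intros)

lemma exp_barrier_ge:
  assumes "0 < \<sigma>" "0 \<le> k" "0 \<le> s"
  shows "m - \<sigma> \<le> exp_barrier m \<sigma> k \<rho> s"
proof -
  have "\<sigma> * exp (- k * s) \<le> \<sigma>" using assms by (simp add: mult_nonneg_nonneg)
  moreover have "0 \<le> \<sigma> * exp (- k * \<rho>^2)" using assms by simp
  ultimately show ?thesis unfolding exp_barrier_def by linarith
qed

lemma exp_barrier_ge_outside:
  assumes "0 < \<sigma>" "0 \<le> k" "\<rho>^2 \<le> s"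
  shows "m \<le> exp_barrier m \<sigma> k \<rho> s"
proof -
  have "exp (- k * s) \<le> exp (- k * \<rho>^2)" using assms by (simp add: mult_left_mono)
  then show ?thesis using assms unfolding exp_barrier_def by simp
qed

text \<open>Once \<open>k \<lambda> \<rho>\<^sup>2\<close> exceeds twice the trace bound \<open>N \<Lambda>\<close> plus the drift bound \<open>K \<rho>\<close>, the term
  \<open>\<lambda> k |x - p|\<^sup>2\<close> coming from \<open>D\<^sup>2\<phi>\<close> makes the barrier a strict supersolution where \<open>|x - p| \<ge> \<rho>/2\<close>.\<close>
lemma exp_barrier_no_touching:
  fixes u :: "real^'n \<Rightarrow> real"
  assumes lam: "0 < lam" "lam \<le> Lam"
    and sub: "visc_subsolution (pucci_hjb_minus lam Lam b c) u"
    and b_bdd: "\<And>\<alpha>. norm (b x0 \<alpha>) \<le> K"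
    and discount: "\<And>\<alpha>. 0 \<le> c x0 \<alpha> * u x0"
    and "0 < \<sigma>" "0 < \<rho>" "\<rho>/2 \<le> dist p x0" "dist p x0 \<le> \<rho>"
    and k: "2 * (real CARD('n) * Lam + K * \<rho> + 1) \<le> k * lam * \<rho>^2"
    and max: "\<exists>r>0. \<forall>y\<in>ball x0 r.
      u y - exp_barrier m \<sigma> k \<rho> ((y-p)\<bullet>(y-p)) \<le> u x0 - exp_barrier m \<sigma> k \<rho> ((x0-p)\<bullet>(x0-p))"
  shows False
proof -
  define v where "v = x0 - p"
  define s where "s = v \<bullet> v"
  define A where "A = exp_barrier' \<sigma> k s"
  have "0 \<le> K" using b_bdd[of undefined] norm_ge_zero order_trans by blast
  have "real CARD('n) * lam \<le> real CARD('n) * Lam" using lam by simp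
  moreover have "lam \<le> real CARD('n) * lam" using lam by simp
  ultimately have "2 * lam \<le> k * lam * \<rho>^2"
    using k \<open>0 \<le> K\<close> \<open>0 < \<rho>\<close> by (smt (verit) mult_nonneg_nonneg)
  then have k\<rho>: "2 \<le> k * \<rho>^2" using lam by (simp add: algebra_simps)
  then have "0 < k" using \<open>0 < \<rho>\<close> by (smt (verit) mult_nonpos_nonneg zero_le_power2)
  have "norm v = dist p x0" by (simp add: v_def dist_norm norm_minus_commute)
  then have s_lo: "\<rho>^2 \<le> 4 * s"
    using \<open>\<rho>/2 \<le> dist p x0\<close> \<open>0 < \<rho>\<close> power_mono[of "\<rho>/2" "norm v" 2]
    by (simp add: s_def dot_square_norm power_divide)
  have G'': "exp_barrier'' \<sigma> k s = - k * A"
    by (simp add: A_def exp_barrier'_def exp_barrier''_def power2_eq_square)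
  have "A > 0" using \<open>0 < \<sigma>\<close> \<open>0 < k\<close> by (simp add: A_def exp_barrier'_def)
  have "1 \<le> 2 * k * s" using k\<rho> s_lo \<open>0 < k\<close> mult_left_mono[OF s_lo, of k] by linarith
  then have concave: "2 * A + (4 * (- k * A)) * s \<le> 0"
    using \<open>A > 0\<close> mult_left_mono[of 1 "2 * k * s" "2 * A"] by (simp add: algebra_simps)
  have "- 2 * A * (K * \<rho>) \<le> c x0 \<alpha> * u x0 - 2 * A * (b x0 \<alpha> \<bullet> (x0 - p))" for \<alpha>
  proof -
    have "b x0 \<alpha> \<bullet> v \<le> norm (b x0 \<alpha>) * norm v" by (rule norm_cauchy_schwarz)
    also have "\<dots> \<le> K * \<rho>"
      using b_bdd \<open>0 \<le> K\<close> \<open>norm v = dist p x0\<close> \<open>dist p x0 \<le> \<rho>\<close> by (intro mult_mono) auto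
    finally have "2 * A * (b x0 \<alpha> \<bullet> v) \<le> 2 * A * (K * \<rho>)" using \<open>A > 0\<close> by simp
    then show ?thesis using discount[of \<alpha>] by (simp add: v_def)
  qed
  moreover have "x0 \<noteq> p" using \<open>\<rho>/2 \<le> dist p x0\<close> \<open>0 < \<rho>\<close> by auto
  ultimately have "- 2 * A * (K * \<rho>)
      \<le> (real CARD('n) - 1) * Lam * (2 * A) + lam * (2 * A + 4 * (- k * A) * s)"
    unfolding G''[symmetric] unfolding A_def
    by (intro subsolution_radial_test[OF lam sub has_real_derivative_exp_barrier
        has_real_derivative_exp_barrier' isCont_exp_barrier'' max])
      (use \<open>A > 0\<close> concave G'' in \<open>auto simp: s_def v_def A_def\<close>)
  moreover have "A * (2 * (real CARD('n) * Lam + K * \<rho> + 1)) \<le> A * (k * lam * (4 * s))"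
  proof -
    have "k * lam * \<rho>^2 \<le> k * lam * (4 * s)" using s_lo \<open>0 < k\<close> lam by (intro mult_left_mono) auto
    with k show ?thesis using \<open>A > 0\<close> by (intro mult_left_mono) auto
  qed
  moreover have "A * lam \<le> A * Lam" using \<open>A > 0\<close> lam by simp
  ultimately show False using \<open>A > 0\<close> by (simp add: algebra_simps)
qed

lemma usc_superlevel_touching_ball:
  fixes u :: "'a::heine_borel \<Rightarrow> real"
  assumes "usc u" "u p < m" "m \<le> u z"
  obtains \<rho> x1 where "0 < \<rho>" "dist p x1 = \<rho>" "m \<le> u x1" "\<And>w. dist p w < \<rho> \<Longrightarrow> u w < m"
proof -
  define S where "S = {x. m \<le> u x}"
  have "- S = {x. u x < m}" by (auto simp: S_def)
  then have "closed S" using \<open>usc u\<close> by (simp add: usc_def closed_def)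
  moreover have "S \<noteq> {}" using \<open>m \<le> u z\<close> by (auto simp: S_def)
  ultimately obtain x1 where "x1 \<in> S" and x1: "\<And>w. w \<in> S \<Longrightarrow> dist p x1 \<le> dist p w"
    using distance_attains_inf[of S p] by blast
  have "u w < m" if "dist p w < dist p x1" for w
    using x1[of w] that by (force simp: S_def)
  moreover have "0 < dist p x1" using \<open>x1 \<in> S\<close> \<open>u p < m\<close> by (auto simp: S_def)
  moreover have "m \<le> u x1" using \<open>x1 \<in> S\<close> by (simp add: S_def)
  ultimately show ?thesis by (intro that[of "dist p x1" x1]) auto
qed

text \<open>Hopf's barrier: the exponential barrier equals \<open>m\<close> on the sphere of radius \<open>\<rho>\<close>, lies above \<open>m\<close>
  outside it and above \<open>m - \<sigma>\<close> everywhere. Were \<open>u\<close> to reach \<open>m\<close> on that sphere, it would touch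
  \<open>u\<close> from above somewhere in the annulus \<open>\<rho>/2 < |x - p| \<le> \<rho>\<close>.\<close>
lemma subsolution_lt_max_on_sphere:
  fixes u :: "real^'n \<Rightarrow> real"
  assumes lam: "0 < lam" "lam \<le> Lam"
    and sub: "visc_subsolution (pucci_hjb_minus lam Lam b c) u"
    and b_bdd: "\<And>x \<alpha>. dist p x \<le> \<rho> \<Longrightarrow> norm (b x \<alpha>) \<le> K"
    and discount: "\<And>x \<alpha>. 0 \<le> c x \<alpha> * u x"
    and max: "\<And>x. u x \<le> m"
    and inner: "\<And>x. dist p x = \<rho>/2 \<Longrightarrow> u x \<le> m - 2 * \<sigma>" and "0 < \<sigma>"
    and "0 < \<rho>" "dist p x1 = \<rho>"
  shows "u x1 < m"
proof (rule ccontr)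
  assume "\<not> u x1 < m"
  have "norm (b x1 undefined) \<le> K" using \<open>dist p x1 = \<rho>\<close> by (intro b_bdd) simp
  then have "0 \<le> K" using norm_ge_zero[of "b x1 undefined"] by linarith
  define k where "k = 2 * (real CARD('n) * Lam + K * \<rho> + 1) / (lam * \<rho>^2)"
  have "0 \<le> real CARD('n) * Lam" "0 \<le> K * \<rho>" using lam \<open>0 < \<rho>\<close> \<open>0 \<le> K\<close> by simp_all
  then have "0 < 2 * (real CARD('n) * Lam + K * \<rho> + 1)" by (smt (verit))
  then have "0 < k" unfolding k_def by (rule divide_pos_pos) (use lam \<open>0 < \<rho>\<close> in simp)
  have k: "2 * (real CARD('n) * Lam + K * \<rho> + 1) \<le> k * lam * \<rho>^2"
    using lam \<open>0 < \<rho>\<close> by (simp add: k_def)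
  define w where "w x = u x - exp_barrier m \<sigma> k \<rho> ((x - p) \<bullet> (x - p))" for x
  have dist_sq: "(x - p) \<bullet> (x - p) = (dist p x)^2" for x
    by (simp add: dist_norm dot_square_norm norm_minus_commute)
  have "usc u" using sub by (simp add: visc_subsolution_def)
  then have "usc w" unfolding w_def[abs_def]
    by (rule usc_diff_continuous[OF _ C2_with_continuous[OF C2_with_radial]])
      (auto intro: has_real_derivative_exp_barrier has_real_derivative_exp_barrier' isCont_exp_barrier'')
  have "0 \<le> w x1"
    using \<open>\<not> u x1 < m\<close> \<open>dist p x1 = \<rho>\<close> by (simp add: w_def dist_sq exp_barrier_def)
  define Ann where "Ann = cball p \<rho> \<inter> {x. \<rho>/2 \<le> dist p x}"
  have "compact Ann" unfolding Ann_def
    by (rule compact_Int_closed) (auto intro!: closed_Collect_le continuous_intros)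
  moreover have "x1 \<in> Ann" using \<open>dist p x1 = \<rho>\<close> \<open>0 < \<rho>\<close> by (simp add: Ann_def)
  moreover have "open {x. \<rho>/2 < dist p x}" by (intro open_Collect_less continuous_intros)
  moreover have "x \<in> {x. \<rho>/2 < dist p x}" if "x \<in> Ann" "w x1 \<le> w x" for x
  proof (rule ccontr)
    assume "x \<notin> {x. \<rho>/2 < dist p x}"
    then have "u x \<le> m - 2 * \<sigma>" using that(1) by (intro inner) (simp add: Ann_def)
    moreover have "m - \<sigma> \<le> exp_barrier m \<sigma> k \<rho> ((x - p) \<bullet> (x - p))"
      using \<open>0 < \<sigma>\<close> \<open>0 < k\<close> by (intro exp_barrier_ge) auto
    ultimately show False using that(2) \<open>0 \<le> w x1\<close> \<open>0 < \<sigma>\<close> by (simp add: w_def)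
  qed
  moreover have "w x \<le> w x1" if "x \<in> {x. \<rho>/2 < dist p x}" "x \<notin> Ann" for x
  proof -
    have "\<rho> \<le> dist p x" using that by (simp add: Ann_def)
    then have "m \<le> exp_barrier m \<sigma> k \<rho> ((x - p) \<bullet> (x - p))"
      using \<open>0 < \<sigma>\<close> \<open>0 < k\<close> \<open>0 < \<rho>\<close>
      by (intro exp_barrier_ge_outside) (auto simp: dist_sq power_mono)
    then show ?thesis using max[of x] \<open>0 \<le> w x1\<close> by (simp add: w_def)
  qed
  ultimately obtain x0 where "x0 \<in> Ann" "w x1 \<le> w x0" "\<exists>r>0. \<forall>y\<in>ball x0 r. w y \<le> w x0"
    by (rule usc_attains_local_max[OF \<open>usc w\<close>])
  show False
  proof (rule exp_barrier_no_touching[OF lam sub _ discount \<open>0 < \<sigma>\<close> \<open>0 < \<rho>\<close> _ _ k])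
    show "\<rho>/2 \<le> dist p x0" "dist p x0 \<le> \<rho>" using \<open>x0 \<in> Ann\<close> by (auto simp: Ann_def)
    then show "norm (b x0 \<alpha>) \<le> K" for \<alpha> by (intro b_bdd)
    show "\<exists>r>0. \<forall>y\<in>ball x0 r. u y - exp_barrier m \<sigma> k \<rho> ((y-p)\<bullet>(y-p))
        \<le> u x0 - exp_barrier m \<sigma> k \<rho> ((x0-p)\<bullet>(x0-p))"
      using \<open>\<exists>r>0. \<forall>y\<in>ball x0 r. w y \<le> w x0\<close> by (simp add: w_def)
  qed
qed

text \<open>If \<open>u\<close> is not constant, take a ball around a point where \<open>u < max u\<close> that touches the set
  where the maximum is attained; on the sphere of half the radius \<open>u\<close> stays below the maximum.\<close>
lemma subsolution_strong_max_principle: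
  fixes u :: "real^'n \<Rightarrow> real"
  assumes lam: "0 < lam" "lam \<le> Lam"
    and sub: "visc_subsolution (pucci_hjb_minus lam Lam b c) u"
    and b_bdd: "\<And>R. \<exists>K. \<forall>x \<alpha>. norm x \<le> R \<longrightarrow> norm (b x \<alpha>) \<le> K"
    and discount: "\<And>x \<alpha>. 0 \<le> c x \<alpha> * u x"
    and max: "\<And>y. u y \<le> u z"
  shows "u p = u z"
proof (rule ccontr)
  assume "u p \<noteq> u z"
  with max have "u p < u z" by (simp add: order_less_le)
  have "usc u" using sub by (simp add: visc_subsolution_def)
  obtain \<rho> x1 where "0 < \<rho>" "dist p x1 = \<rho>" "u z \<le> u x1"
      and below: "\<And>w. dist p w < \<rho> \<Longrightarrow> u w < u z"
    by (rule usc_superlevel_touching_ball[OF \<open>usc u\<close> \<open>u p < u z\<close> order_refl]) blast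
  have "sphere p (\<rho>/2) \<noteq> {}" using \<open>0 < \<rho>\<close> by simp
  then obtain y1 where "y1 \<in> sphere p (\<rho>/2)" and y1: "\<And>w. w \<in> sphere p (\<rho>/2) \<Longrightarrow> u w \<le> u y1"
    by (rule usc_attains_max[OF \<open>usc u\<close> compact_sphere]) blast
  obtain K where K: "\<And>x \<alpha>. norm x \<le> norm p + \<rho> \<Longrightarrow> norm (b x \<alpha>) \<le> K"
    using b_bdd[of "norm p + \<rho>"] by auto
  have "u x1 < u z"
  proof (rule subsolution_lt_max_on_sphere[OF lam sub _ discount max _ _ \<open>0 < \<rho>\<close> \<open>dist p x1 = \<rho>\<close>])
    show "norm (b x \<alpha>) \<le> K" if "dist p x \<le> \<rho>" for x \<alpha>
      using norm_triangle_ineq[of p "x - p"] that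
      by (intro K) (simp add: dist_norm norm_minus_commute)
    show "u x \<le> u z - 2 * ((u z - u y1) / 2)" if "dist p x = \<rho>/2" for x
      using y1[of x] that by (simp add: field_simps)
    show "0 < (u z - u y1) / 2" using below[of y1] \<open>y1 \<in> sphere p (\<rho>/2)\<close> \<open>0 < \<rho>\<close> by simp
  qed
  with \<open>u z \<le> u x1\<close> show False by simp
qed

section \<open>The Liouville theorem\<close>

lemma growth_pointwise:
  fixes b :: "'v::real_inner \<Rightarrow> 'a \<Rightarrow> 'v"
  assumes bounded: "\<forall>R>0. \<exists>K. \<forall>x \<alpha>. norm x \<le> R \<longrightarrow> norm (b x \<alpha>) + \<bar>c x \<alpha>\<bar> \<le> K"
    and "0 < norm x"
    and sup: "(SUP \<alpha>. b x \<alpha> \<bullet> x - c x \<alpha> * (norm x)\<^sup>2 * ln (norm x)) \<le> L"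
  shows "b x \<alpha> \<bullet> x \<le> L + c x \<alpha> * (norm x)\<^sup>2 * ln (norm x)"
proof -
  define n where "n = norm x"
  obtain K where K: "\<And>\<beta>. norm (b x \<beta>) + \<bar>c x \<beta>\<bar> \<le> K"
    using bounded \<open>0 < norm x\<close> by blast
  have "b x \<beta> \<bullet> x - c x \<beta> * n\<^sup>2 * ln n \<le> K * n + K * n^2 * \<bar>ln n\<bar>" for \<beta>
  proof -
    have "norm (b x \<beta>) \<le> K" "\<bar>c x \<beta>\<bar> \<le> K"
      using K[of \<beta>] norm_ge_zero[of "b x \<beta>"] abs_ge_zero[of "c x \<beta>"] by linarith+
    moreover have "b x \<beta> \<bullet> x \<le> norm (b x \<beta>) * n" unfolding n_def by (rule norm_cauchy_schwarz)
    moreover have "- (c x \<beta> * n\<^sup>2 * ln n) \<le> \<bar>c x \<beta>\<bar> * n^2 * \<bar>ln n\<bar>"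
      by (metis abs_ge_minus_self abs_mult abs_power2)
    ultimately show ?thesis using \<open>0 < norm x\<close>
      by (smt (verit) mult_right_mono n_def abs_ge_zero zero_le_power2 mult_nonneg_nonneg)
  qed
  then have "bdd_above (range (\<lambda>\<beta>. b x \<beta> \<bullet> x - c x \<beta> * (norm x)\<^sup>2 * ln (norm x)))"
    by (intro bdd_aboveI2) (auto simp: n_def)
  then have "b x \<alpha> \<bullet> x - c x \<alpha> * (norm x)\<^sup>2 * ln (norm x) \<le> L"
    using sup by (simp add: cSUP_le_iff)
  then show ?thesis by simp
qed

lemma drift_bounded_on_balls:
  assumes "\<forall>R>0. \<exists>K. \<forall>x \<alpha>. norm x \<le> R \<longrightarrow> norm (b x \<alpha>) + \<bar>c x \<alpha>\<bar> \<le> K"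
  shows "\<exists>K. \<forall>x \<alpha>. norm x \<le> R \<longrightarrow> norm (b x \<alpha>) \<le> K"
proof -
  have "0 < max R 1" by simp
  then obtain K where K: "\<forall>x \<alpha>. norm x \<le> max R 1 \<longrightarrow> norm (b x \<alpha>) + \<bar>c x \<alpha>\<bar> \<le> K"
    using assms by blast
  have "norm (b x \<alpha>) \<le> K" if "norm x \<le> R" for x \<alpha>
  proof -
    have "norm x \<le> max R 1" using that by simp
    then have "norm (b x \<alpha>) + \<bar>c x \<alpha>\<bar> \<le> K" using K by blast
    then show ?thesis using abs_ge_zero[of "c x \<alpha>"] by linarith
  qed
  then show ?thesis by blast
qed

lemma Limsup_le_0_imp_le_ln:
  fixes u :: "'v::real_normed_vector \<Rightarrow> real"
  assumes "Limsup at_infinity (\<lambda>x. ereal (u x / ln (norm x))) \<le> 0" "0 < \<epsilon>"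
  shows "\<exists>R. \<forall>x. R \<le> norm x \<longrightarrow> u x \<le> \<epsilon> * ln (norm x)"
proof -
  have "Limsup at_infinity (\<lambda>x. ereal (u x / ln (norm x))) < ereal \<epsilon>"
    using assms by (simp add: le_less_trans)
  then have "eventually (\<lambda>x. ereal (u x / ln (norm x)) < ereal \<epsilon>) at_infinity"
    by (rule Limsup_lessD)
  then obtain R where R: "\<And>x. R \<le> norm x \<Longrightarrow> u x / ln (norm x) < \<epsilon>"
    unfolding eventually_at_infinity by auto
  have "u x \<le> \<epsilon> * ln (norm x)" if "max R 2 \<le> norm x" for x
  proof -
    have "1 < norm x" using that by simp
    then have "0 < ln (norm x)" by (rule ln_gt_zero)
    then show ?thesis using R[of x] that by (simp add: pos_divide_less_eq mult.commute)
  qed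
  then show ?thesis by blast
qed

lemma subsolution_liouville:
  fixes u :: "real^'n \<Rightarrow> real"
  assumes lam: "0 < lam" "lam \<le> Lam"
    and bounded: "\<forall>R>0. \<exists>K. \<forall>x \<alpha>. norm x \<le> R \<longrightarrow> norm (b x \<alpha>) + \<bar>c x \<alpha>\<bar> \<le> K"
    and c_nonneg: "\<forall>x \<alpha>. 0 \<le> c x \<alpha>"
    and growth: "\<exists>Ro>0. \<forall>x. norm x \<ge> Ro \<longrightarrow>
                   (SUP \<alpha>. b x \<alpha> \<bullet> x - c x \<alpha> * (norm x)\<^sup>2 * ln (norm x))
                     \<le> lam - (real CARD('n) - 1) * Lam"
    and sub: "visc_subsolution (pucci_hjb_minus lam Lam b c) u"
    and lim: "Limsup at_infinity (\<lambda>x. ereal (u x / ln (norm x))) \<le> 0"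
    and discount: "(\<forall>x \<alpha>. c x \<alpha> = 0) \<or> (\<forall>x. 0 \<le> u x)"
  shows "\<exists>k. \<forall>x. u x = k"
proof -
  obtain Ro where "0 < Ro" and Ro: "\<And>x. Ro \<le> norm x \<Longrightarrow>
      (SUP \<alpha>. b x \<alpha> \<bullet> x - c x \<alpha> * (norm x)\<^sup>2 * ln (norm x)) \<le> lam - (real CARD('n) - 1) * Lam"
    using growth by blast
  define r where "r = max Ro 2"
  have "usc u" using sub by (simp add: visc_subsolution_def)
  have "cball (0::real^'n) r \<noteq> {}" by (simp add: r_def)
  then obtain z where z: "\<And>y. y \<in> cball 0 r \<Longrightarrow> u y \<le> u z"
    by (rule usc_attains_max[OF \<open>usc u\<close> compact_cball]) blast
  have "u x \<le> u z" for x
  proof (rule subsolution_le_outside_ball[OF lam sub c_nonneg[rule_format] _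
        Limsup_le_0_imp_le_ln[OF lim]])
    show "b x \<alpha> \<bullet> x \<le> lam - (real CARD('n) - 1) * Lam + c x \<alpha> * (norm x)\<^sup>2 * ln (norm x)"
      if "r \<le> norm x" for x \<alpha>
    proof (rule growth_pointwise[OF bounded _ Ro])
      have "Ro \<le> norm x" "2 \<le> norm x" using that by (simp_all add: r_def)
      then show "0 < norm x" "Ro \<le> norm x" by linarith+
    qed
    show "u y \<le> u z" if "norm y \<le> r" for y using that z by simp
    show "(\<forall>x \<alpha>. c x \<alpha> = 0) \<or> 0 \<le> u z" using discount by blast
  qed (simp_all add: r_def)
  moreover have "0 \<le> c x \<alpha> * u x" for x \<alpha> using discount c_nonneg by auto
  ultimately have "u x = u z" for x
    using drift_bounded_on_balls[OF bounded]
    by (intro subsolution_strong_max_principle[OF lam sub]) auto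
  then show ?thesis by blast
qed

lemma supersolution_imp_subsolution_uminus:
  assumes "visc_supersolution (pucci_hjb_plus lam Lam b c) v"
  shows "visc_subsolution (pucci_hjb_minus lam Lam b c) (\<lambda>x. - v x)"
  unfolding visc_subsolution_def
proof (intro conjI allI impI)
  show "usc (\<lambda>x. - v x)" using assms by (simp add: visc_supersolution_def lsc_imp_usc_uminus)
next
  fix phi Dphi D2phi x0
  assume test: "C2_with phi Dphi D2phi \<and> (\<exists>r>0. \<forall>y\<in>ball x0 r. - v y - phi y \<le> - v x0 - phi x0)"
  then have "C2_with (\<lambda>x. - phi x) (\<lambda>x. - Dphi x) (\<lambda>x. - D2phi x)"
    by (blast intro: C2_with_uminus)
  moreover have "\<exists>r>0. \<forall>y\<in>ball x0 r. v y - (- phi y) \<ge> v x0 - (- phi x0)"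
    using test by fastforce
  ultimately have "0 \<le> pucci_hjb_plus lam Lam b c x0 (v x0) (- Dphi x0) (- D2phi x0)"
    using assms unfolding visc_supersolution_def by blast
  moreover have "(SUP \<alpha>. c x0 \<alpha> * v x0 - b x0 \<alpha> \<bullet> (- Dphi x0))
      = - (INF \<alpha>. c x0 \<alpha> * (- v x0) - b x0 \<alpha> \<bullet> Dphi x0)"
    by (simp add: Inf_real_def image_image add.commute)
  ultimately show "pucci_hjb_minus lam Lam b c x0 (- v x0) (Dphi x0) (D2phi x0) \<le> 0"
    by (simp add: pucci_plus_uminus)
qed

lemma supersolution_liouville:
  fixes v :: "real^'n \<Rightarrow> real"
  assumes lam: "0 < lam" "lam \<le> Lam"
    and bounded: "\<forall>R>0. \<exists>K. \<forall>x \<alpha>. norm x \<le> R \<longrightarrow> norm (b x \<alpha>) + \<bar>c x \<alpha>\<bar> \<le> K"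
    and c_nonneg: "\<forall>x \<alpha>. 0 \<le> c x \<alpha>"
    and growth: "\<exists>Ro>0. \<forall>x. norm x \<ge> Ro \<longrightarrow>
                   (SUP \<alpha>. b x \<alpha> \<bullet> x - c x \<alpha> * (norm x)\<^sup>2 * ln (norm x))
                     \<le> lam - (real CARD('n) - 1) * Lam"
    and super: "visc_supersolution (pucci_hjb_plus lam Lam b c) v"
    and lim: "Liminf at_infinity (\<lambda>x. ereal (v x / ln (norm x))) \<ge> 0"
    and discount: "(\<forall>x \<alpha>. c x \<alpha> = 0) \<or> (\<forall>x. v x \<le> 0)"
  shows "\<exists>k. \<forall>x. v x = k"
proof -
  have "Limsup at_infinity (\<lambda>x. ereal (- v x / ln (norm x)))
      = - Liminf at_infinity (\<lambda>x. ereal (v x / ln (norm x)))"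
    by (simp add: ereal_Limsup_uminus[symmetric])
  then have "Limsup at_infinity (\<lambda>x. ereal (- v x / ln (norm x))) \<le> 0"
    using lim by (simp add: ereal_uminus_le_reorder)
  moreover have "(\<forall>x \<alpha>. c x \<alpha> = 0) \<or> (\<forall>x. 0 \<le> - v x)" using discount by auto
  ultimately obtain k where "\<forall>x. - v x = k"
    using subsolution_liouville[OF lam bounded c_nonneg growth
        supersolution_imp_subsolution_uminus[OF super]] by blast
  then have "\<forall>x. v x = - k" by (metis minus_minus)
  then show ?thesis by blast
qed

theorem corollary2p7:
  fixes lam Lam :: real
    and b :: "real^'n \<Rightarrow> 'a::metric_space \<Rightarrow> real^'n"
    and c :: "real^'n \<Rightarrow> 'a \<Rightarrow> real"
  assumes lam_pos: "0 < lam" and lam_le: "lam \<le> Lam"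
    and b_cont: "continuous_on UNIV (\<lambda>(x, \<alpha>). b x \<alpha>)"
    and c_cont: "continuous_on UNIV (\<lambda>(x, \<alpha>). c x \<alpha>)"
    and bounds: "\<forall>R>0. \<exists>K. (\<forall>x \<alpha>. norm x \<le> R \<longrightarrow> norm (b x \<alpha>) + \<bar>c x \<alpha>\<bar> \<le> K) \<and>
                     (\<forall>x y \<alpha>. norm x \<le> R \<and> norm y \<le> R \<longrightarrow>
                          norm (b x \<alpha> - b y \<alpha>) \<le> K * norm (x - y))"
    and c_nonneg: "\<forall>x \<alpha>. 0 \<le> c x \<alpha>"
    and c_unif: "\<forall>R>0. \<forall>\<epsilon>>0. \<exists>\<delta>>0. \<forall>x y \<alpha>. norm x \<le> R \<and> norm y \<le> R \<and> dist x y < \<delta> \<longrightarrow>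
                     \<bar>c x \<alpha> - c y \<alpha>\<bar> < \<epsilon>"
    and growth: "\<exists>Ro>0. \<forall>x. norm x \<ge> Ro \<longrightarrow>
                   (SUP \<alpha>. b x \<alpha> \<bullet> x - c x \<alpha> * (norm x)\<^sup>2 * ln (norm x))
                     \<le> lam - (real CARD('n) - 1) * Lam"
  shows
    "(\<forall>u :: real^'n \<Rightarrow> real.
        visc_subsolution
          (\<lambda>x t p X. pucci_minus lam Lam X + (INF \<alpha>. c x \<alpha> * t - b x \<alpha> \<bullet> p)) u \<and>
        Limsup at_infinity (\<lambda>x. ereal (u x / ln (norm x))) \<le> 0 \<and>
        ((\<forall>x \<alpha>. c x \<alpha> = 0) \<or> (\<forall>x. 0 \<le> u x))
        \<longrightarrow> (\<exists>k. \<forall>x. u x = k))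
   \<and> (\<forall>v :: real^'n \<Rightarrow> real.
        visc_supersolution
          (\<lambda>x t p X. pucci_plus lam Lam X + (SUP \<alpha>. c x \<alpha> * t - b x \<alpha> \<bullet> p)) v \<and>
        Liminf at_infinity (\<lambda>x. ereal (v x / ln (norm x))) \<ge> 0 \<and>
        ((\<forall>x \<alpha>. c x \<alpha> = 0) \<or> (\<forall>x. v x \<le> 0))
        \<longrightarrow> (\<exists>k. \<forall>x. v x = k))"
proof -
  have bounded: "\<forall>R>0. \<exists>K. \<forall>x \<alpha>. norm x \<le> R \<longrightarrow> norm (b x \<alpha>) + \<bar>c x \<alpha>\<bar> \<le> K"
    using bounds by blast
  show ?thesis
    using subsolution_liouville[OF lam_pos lam_le bounded c_nonneg growth]
      supersolution_liouville[OF lam_pos lam_le bounded c_nonneg growth]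
    by blast
qed

end
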